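(* Let $(L,\varphi,\xi,\eta,g)$ be the 3-dimensional almost contact B-metric Lie group described in the context. For each $s\in\{1,4,5,8,9,10,11\}$, $(L,\varphi,\xi,\eta,g)$ belongs to the class $\mathcal{F}_s$ if and only if there exist real numbers $\alpha,\beta$ such that the Lie algebra $\mathfrak l$ is given by the corresponding commutators: $\mathcal{F}_1$: $[E_0,E_1]=[E_0,E_2]=0$, $[E_1,E_2]=\alpha E_1+\beta E_2$; $\mathcal{F}_4$: $[E_0,E_1]=\alpha E_2$, $[E_0,E_2]=-\alpha E_1$, $[E_1,E_2]=0$; $\mathcal{F}_5$: $[E_0,E_1]=\alpha E_1$, $[E_0,E_2]=\alpha E_2$, $[E_1,E_2]=0$; $\mathcal{F}_8$: $[E_0,E_1]=\alpha E_2$, $[E_0,E_2]=\alpha E_1$, $[E_1,E_2]=-2\alpha E_0$; $\mathcal{F}_9$: $[E_0,E_1]=\alpha E_1$, $[E_0,E_2]=-\alpha E_2$, $[E_1,E_2]=0$; $\mathcal{F}_{10}$: $[E_0,E_1]=\alpha E_2$, $[E_0,E_2]=\alpha E_1$, $[E_1,E_2]=0$; $\mathcal{F}_{11}$: $[E_0,E_1]=\alpha E_0$, $[E_0,E_2]=\beta E_0$, $[E_1,E_2]=0$.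
   Context: Let $L$ be a 3-dimensional real connected Lie group with Lie algebra $\mathfrak l$, and let $\{E_0,E_1,E_2\}$ be a basis of left-invariant vector fields, with $[E_i,E_j]=C_{ij}^kE_k$. Define the left-invariant almost contact structure $(\varphi,\xi,\eta)$ by $\varphi E_0=0$, $\varphi E_1=E_2$, $\varphi E_2=-E_1$, $\xi=E_0$, $\eta(E_0)=1$, $\eta(E_1)=\eta(E_2)=0$, and the left-invariant pseudo-Riemannian metric $g$ by $g(E_0,E_0)=g(E_1,E_1)=-g(E_2,E_2)=1$, $g(E_i,E_j)=0$ for $i\neq j$. Then $(L,\varphi,\xi,\eta,g)$ is an almost contact B-metric manifold, i.e. $\varphi\xi=0$, $\varphi^2=-\mathrm{Id}+\eta\otimes\xi$, $\eta\circ\varphi=0$, $\eta(\xi)=1$, $g(\varphi x,\varphi y)=-g(x,y)+\eta(x)\eta(y)$. Let $\nabla$ be the Levi-Civita connection of $g$, $F(x,y,z)=g((\nabla_x\varphi)y,z)$, and $F_{ijk}=F(E_i,E_j,E_k)$, $i,j,k\in\{0,1,2\}$. Classes (in dimension 3, with respect to this basis): the manifold belongs to $\mathcal{F}_1$ iff all $F_{ijk}$ vanish except possibly $F_{111}=F_{122}$ and $F_{211}=F_{222}$; $\mathcal{F}_4$ iff all vanish except possibly $F_{101}=F_{110}=-F_{202}=-F_{220}$; $\mathcal{F}_5$ iff all vanish except possibly $F_{102}=F_{120}=F_{201}=F_{210}$; $\mathcal{F}_8$ iff all vanish except possibly $F_{101}=F_{110}=F_{202}=F_{220}=:\lambda$;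 $\mathcal{F}_9$ iff all vanish except possibly $F_{102}=F_{120}=-F_{201}=-F_{210}=:\mu$; $\mathcal{F}_{10}$ iff all vanish except possibly $F_{011}=F_{022}=:\nu$; $\mathcal{F}_{11}$ iff all vanish except possibly $F_{010}=F_{001}$ and $F_{020}=F_{002}$. The manifold belongs to a direct sum $\mathcal{F}_{s_1}\oplus\dots\oplus\mathcal{F}_{s_m}$ iff $F$ is a sum of tensors each of which has the form required for the corresponding class $\mathcal{F}_{s_j}$. *)

theory Defs
  imports "HOL-Analysis.Analysis"
begin

text \<open>Left-invariant vector fields on the 3-dimensional Lie group L are identified with
  their coordinate vectors (real^3) with respect to the basis E_0, E_1, E_2 (index type 3).
  The Lie algebra is encoded by structure constants C i j k, i.e. [E_i,E_j] = sum_k C i j k E_k.\<close>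

definition E :: "3 \<Rightarrow> real^3" where
  "E i = axis i 1"

definition bracket :: "(3 \<Rightarrow> 3 \<Rightarrow> 3 \<Rightarrow> real) \<Rightarrow> real^3 \<Rightarrow> real^3 \<Rightarrow> real^3" where
  "bracket C x y = (\<chi> k. \<Sum>i\<in>UNIV. \<Sum>j\<in>UNIV. x$i * y$j * C i j k)"

definition lie_algebra :: "(3 \<Rightarrow> 3 \<Rightarrow> 3 \<Rightarrow> real) \<Rightarrow> bool" where
  "lie_algebra C \<longleftrightarrow>
     (\<forall>x y. bracket C x y = - bracket C y x) \<and>
     (\<forall>x y z. bracket C (bracket C x y) z + bracket C (bracket C y z) x
               + bracket C (bracket C z x) y = 0)"

definition eps :: "3 \<Rightarrow> real" where
  "eps k = (if k = 2 then -1 else 1)"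

definition gB :: "real^3 \<Rightarrow> real^3 \<Rightarrow> real" where
  "gB x y = (\<Sum>k\<in>UNIV. eps k * x$k * y$k)"

definition phi :: "real^3 \<Rightarrow> real^3" where
  "phi x = (\<chi> k. if k = 1 then - x$2 else if k = 2 then x$1 else 0)"

definition xi :: "real^3" where
  "xi = E 0"

definition eta :: "real^3 \<Rightarrow> real" where
  "eta x = x$0"

text \<open>Levi-Civita connection on left-invariant fields, via the Koszul formula
  2 g(nabla_X Y, Z) = g([X,Y],Z) - g([Y,Z],X) + g([Z,X],Y)
  (the derivative terms vanish since g is left-invariant).\<close>
definition nabla :: "(3 \<Rightarrow> 3 \<Rightarrow> 3 \<Rightarrow> real) \<Rightarrow> real^3 \<Rightarrow> real^3 \<Rightarrow> real^3" where
  "nabla C x y = (\<chi> k. eps k *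
      (gB (bracket C x y) (E k) - gB (bracket C y (E k)) x + gB (bracket C (E k) x) y) / 2)"

definition Ften :: "(3 \<Rightarrow> 3 \<Rightarrow> 3 \<Rightarrow> real) \<Rightarrow> real^3 \<Rightarrow> real^3 \<Rightarrow> real^3 \<Rightarrow> real" where
  "Ften C x y z = gB (nabla C x (phi y) - phi (nabla C x y)) z"

definition Fc :: "(3 \<Rightarrow> 3 \<Rightarrow> 3 \<Rightarrow> real) \<Rightarrow> 3 \<Rightarrow> 3 \<Rightarrow> 3 \<Rightarrow> real" where
  "Fc C i j k = Ften C (E i) (E j) (E k)"

definition inF1 :: "(3 \<Rightarrow> 3 \<Rightarrow> 3 \<Rightarrow> real) \<Rightarrow> bool" where
  "inF1 C \<longleftrightarrow> (\<exists>a b. \<forall>i j k. Fc C i j k =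
     (if (i,j,k) \<in> {(1,1,1),(1,2,2)} then a
      else if (i,j,k) \<in> {(2,1,1),(2,2,2)} then b else 0))"

definition inF4 :: "(3 \<Rightarrow> 3 \<Rightarrow> 3 \<Rightarrow> real) \<Rightarrow> bool" where
  "inF4 C \<longleftrightarrow> (\<exists>a. \<forall>i j k. Fc C i j k =
     (if (i,j,k) \<in> {(1,0,1),(1,1,0)} then a
      else if (i,j,k) \<in> {(2,0,2),(2,2,0)} then - a else 0))"

definition inF5 :: "(3 \<Rightarrow> 3 \<Rightarrow> 3 \<Rightarrow> real) \<Rightarrow> bool" where
  "inF5 C \<longleftrightarrow> (\<exists>a. \<forall>i j k. Fc C i j k =
     (if (i,j,k) \<in> {(1,0,2),(1,2,0),(2,0,1),(2,1,0)} then a else 0))"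

definition inF8 :: "(3 \<Rightarrow> 3 \<Rightarrow> 3 \<Rightarrow> real) \<Rightarrow> bool" where
  "inF8 C \<longleftrightarrow> (\<exists>a. \<forall>i j k. Fc C i j k =
     (if (i,j,k) \<in> {(1,0,1),(1,1,0),(2,0,2),(2,2,0)} then a else 0))"

definition inF9 :: "(3 \<Rightarrow> 3 \<Rightarrow> 3 \<Rightarrow> real) \<Rightarrow> bool" where
  "inF9 C \<longleftrightarrow> (\<exists>a. \<forall>i j k. Fc C i j k =
     (if (i,j,k) \<in> {(1,0,2),(1,2,0)} then a
      else if (i,j,k) \<in> {(2,0,1),(2,1,0)} then - a else 0))"

definition inF10 :: "(3 \<Rightarrow> 3 \<Rightarrow> 3 \<Rightarrow> real) \<Rightarrow> bool" where
  "inF10 C \<longleftrightarrow> (\<exists>a. \<forall>i j k. Fc C i j k =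
     (if (i,j,k) \<in> {(0,1,1),(0,2,2)} then a else 0))"

definition inF11 :: "(3 \<Rightarrow> 3 \<Rightarrow> 3 \<Rightarrow> real) \<Rightarrow> bool" where
  "inF11 C \<longleftrightarrow> (\<exists>a b. \<forall>i j k. Fc C i j k =
     (if (i,j,k) \<in> {(0,1,0),(0,0,1)} then a
      else if (i,j,k) \<in> {(0,2,0),(0,0,2)} then b else 0))"

end

theory Submission
  imports Defs
begin

(* Everything is computed in the frame E_0, E_1, E_2.  The Koszul formula
   gives the connection coefficients g(nabla_{E_i} E_j, E_k) in terms of the structure
   constants C i j k, and since phi permutes the frame up to sign (phi E_0 = 0,
   phi E_1 = E_2, phi E_2 = -E_1), every component F_ijk = g((nabla_{E_i} phi) E_j, E_k)
   is a linear combination of the structure constants.  Using only the antisymmetry of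
   the bracket, all 27 components are expressed
   through the nine constants C 0 1 k, C 0 2 k, C 1 2 k (lemma F_table).  Each class
   F_s prescribes which components vanish and which coincide; read through F_table this
   is a linear system in the nine constants whose solutions are exactly the commutator
   families of the theorem (lemmas inF1_iff, ..., inF11_iff). *)

lemma E_component: "E i $ k = of_bool (k = i)"
  by (simp add: E_def axis_def)

lemma sum_E_left: "(\<Sum>i\<in>UNIV. E a $ i * f i) = f a"
  by (simp add: E_component)

lemma sum_E_right: "(\<Sum>i\<in>UNIV. f i * E a $ i) = f a"
  by (simp add: E_component)

lemma cases_3: "(i::3) = 0 \<or> i = 1 \<or> i = 2"
  using exhaust_3[of i] by auto

lemma all_3: "(\<forall>i::3. P i) \<longleftrightarrow> P 0 \<and> P 1 \<and> P 2"
  using cases_3 by metis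

lemma bracket_E: "bracket C (E a) (E b) = (\<chi> k. C a b k)"
proof -
  have "(\<Sum>i\<in>UNIV. \<Sum>j\<in>UNIV. E a $ i * E b $ j * C i j k) = C a b k" for k
  proof -
    have "(\<Sum>i\<in>UNIV. \<Sum>j\<in>UNIV. E a $ i * E b $ j * C i j k)
        = (\<Sum>i\<in>UNIV. E a $ i * (\<Sum>j\<in>UNIV. E b $ j * C i j k))"
      by (simp add: sum_distrib_left mult.assoc)
    then show ?thesis
      by (simp add: sum_E_left)
  qed
  then show ?thesis
    by (simp add: bracket_def vec_eq_iff)
qed

lemma bracket_E_eq:
  "bracket C (E i) (E j) = v \<longleftrightarrow> C i j 0 = v $ 0 \<and> C i j 1 = v $ 1 \<and> C i j 2 = v $ 2"
  by (simp add: bracket_E vec_eq_iff all_3)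

lemma lie_algebra_antisym:
  assumes "lie_algebra C"
  shows "C i j k = - C j i k"
proof -
  have "bracket C (E i) (E j) = - bracket C (E j) (E i)"
    using assms unfolding lie_algebra_def by blast
  then show ?thesis
    by (simp add: bracket_E vec_eq_iff)
qed

lemma gB_E: "gB x (E k) = eps k * x $ k"
  by (simp add: gB_def sum_E_right)

lemma phi_component: "phi v $ 0 = 0" "phi v $ 1 = - v $ 2" "phi v $ 2 = v $ 1"
  by (simp_all add: phi_def)

lemma phi_E: "phi (E 0) = 0" "phi (E 1) = E 2" "phi (E 2) = - E 1"
  by (simp_all add: phi_def E_component vec_eq_iff)

text \<open>Bracket and metric are bilinear; only compatibility with negation is needed here,
  to pass nabla through phi E_2 = -E_1.\<close>

lemma bracket_minus_left: "bracket C (- x) y = - bracket C x y"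
  by (simp add: bracket_def vec_eq_iff sum_negf)

lemma bracket_minus_right: "bracket C x (- y) = - bracket C x y"
  by (simp add: bracket_def vec_eq_iff sum_negf)

lemma gB_minus_left: "gB (- x) y = - gB x y"
  by (simp add: gB_def sum_negf)

lemma gB_minus_right: "gB x (- y) = - gB x y"
  by (simp add: gB_def sum_negf)

lemma nabla_uminus: "nabla C x (- y) = - nabla C x y"
  by (simp add: nabla_def vec_eq_iff bracket_minus_left bracket_minus_right
      gB_minus_left gB_minus_right field_simps)

lemma nabla_zero: "nabla C x 0 = 0"
  by (simp add: nabla_def bracket_def gB_def vec_eq_iff)

lemma nabla_E:
  "nabla C (E i) (E j) $ k = (C i j k - eps k * eps i * C j k i + eps k * eps j * C k i j) / 2"
proof -
  have eps_sq: "eps k * (eps k * x) = x" for x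
    by (simp add: eps_def)
  show ?thesis
    by (simp add: nabla_def gB_E bracket_E distrib_left right_diff_distrib mult.assoc eps_sq)
qed

lemma Fc_E: "Fc C i j k = eps k * (nabla C (E i) (phi (E j)) $ k - phi (nabla C (E i) (E j)) $ k)"
  by (simp add: Fc_def Ften_def gB_E)

text \<open>From here on the structure constants are only assumed antisymmetric, which is all
  the characterisation needs.\<close>

context
  fixes C :: "3 \<Rightarrow> 3 \<Rightarrow> 3 \<Rightarrow> real"
  assumes antisym: "\<And>i j k. C i j k = - C j i k"
begin

lemma antisym_normal:
  "C i i k = 0" "C 1 0 k = - C 0 1 k" "C 2 0 k = - C 0 2 k" "C 2 1 k = - C 1 2 k"
  using antisym[of i i k] antisym[of 1 0 k] antisym[of 2 0 k] antisym[of 2 1 k] by simp_all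

lemma F_table:
  "Fc C 0 0 0 = 0"
  "Fc C 0 0 1 = C 0 2 0"
  "Fc C 0 0 2 = - C 0 1 0"
  "Fc C 0 1 0 = C 0 2 0"
  "Fc C 0 1 1 = C 0 1 2 + C 0 2 1 + C 1 2 0"
  "Fc C 0 1 2 = 0"
  "Fc C 0 2 0 = - C 0 1 0"
  "Fc C 0 2 1 = 0"
  "Fc C 0 2 2 = C 0 1 2 + C 0 2 1 + C 1 2 0"
  "Fc C 1 0 0 = 0"
  "Fc C 1 0 1 = - (1/2) * C 0 1 2 + (1/2) * C 0 2 1 + (1/2) * C 1 2 0"
  "Fc C 1 0 2 = - C 0 1 1"
  "Fc C 1 1 0 = - (1/2) * C 0 1 2 + (1/2) * C 0 2 1 + (1/2) * C 1 2 0"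
  "Fc C 1 1 1 = 2 * C 1 2 1"
  "Fc C 1 1 2 = 0"
  "Fc C 1 2 0 = - C 0 1 1"
  "Fc C 1 2 1 = 0"
  "Fc C 1 2 2 = 2 * C 1 2 1"
  "Fc C 2 0 0 = 0"
  "Fc C 2 0 1 = - C 0 2 2"
  "Fc C 2 0 2 = (1/2) * C 0 1 2 - (1/2) * C 0 2 1 + (1/2) * C 1 2 0"
  "Fc C 2 1 0 = - C 0 2 2"
  "Fc C 2 1 1 = - 2 * C 1 2 2"
  "Fc C 2 1 2 = 0"
  "Fc C 2 2 0 = (1/2) * C 0 1 2 - (1/2) * C 0 2 1 + (1/2) * C 1 2 0"
  "Fc C 2 2 1 = 0"
  "Fc C 2 2 2 = - 2 * C 1 2 2"
  by (simp_all add: Fc_E phi_E phi_component nabla_uminus nabla_zero nabla_E eps_def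
      antisym_normal field_simps)

lemmas class_simps = F_table bracket_E_eq all_3 E_component

lemma inF1_iff:
  "inF1 C \<longleftrightarrow> (\<exists>\<alpha> \<beta>. bracket C (E 0) (E 1) = 0 \<and> bracket C (E 0) (E 2) = 0 \<and>
      bracket C (E 1) (E 2) = \<alpha> *\<^sub>R E 1 + \<beta> *\<^sub>R E 2)"
  unfolding inF1_def by (simp add: class_simps) (auto simp: field_simps)

lemma inF4_iff:
  "inF4 C \<longleftrightarrow> (\<exists>\<alpha>. bracket C (E 0) (E 1) = \<alpha> *\<^sub>R E 2 \<and>
      bracket C (E 0) (E 2) = - \<alpha> *\<^sub>R E 1 \<and> bracket C (E 1) (E 2) = 0)"
  unfolding inF4_def by (simp add: class_simps) (auto simp: field_simps)

lemma inF5_iff: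
  "inF5 C \<longleftrightarrow> (\<exists>\<alpha>. bracket C (E 0) (E 1) = \<alpha> *\<^sub>R E 1 \<and>
      bracket C (E 0) (E 2) = \<alpha> *\<^sub>R E 2 \<and> bracket C (E 1) (E 2) = 0)"
  unfolding inF5_def by (simp add: class_simps) (auto simp: field_simps)

lemma inF8_iff:
  "inF8 C \<longleftrightarrow> (\<exists>\<alpha>. bracket C (E 0) (E 1) = \<alpha> *\<^sub>R E 2 \<and>
      bracket C (E 0) (E 2) = \<alpha> *\<^sub>R E 1 \<and> bracket C (E 1) (E 2) = (-2 * \<alpha>) *\<^sub>R E 0)"
  unfolding inF8_def by (simp add: class_simps) (auto simp: field_simps)

lemma inF9_iff:
  "inF9 C \<longleftrightarrow> (\<exists>\<alpha>. bracket C (E 0) (E 1) = \<alpha> *\<^sub>R E 1 \<and>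
      bracket C (E 0) (E 2) = - \<alpha> *\<^sub>R E 2 \<and> bracket C (E 1) (E 2) = 0)"
  unfolding inF9_def by (simp add: class_simps) (auto simp: field_simps)

lemma inF10_iff:
  "inF10 C \<longleftrightarrow> (\<exists>\<alpha>. bracket C (E 0) (E 1) = \<alpha> *\<^sub>R E 2 \<and>
      bracket C (E 0) (E 2) = \<alpha> *\<^sub>R E 1 \<and> bracket C (E 1) (E 2) = 0)"
  unfolding inF10_def by (simp add: class_simps) (auto simp: field_simps)

lemma inF11_iff:
  "inF11 C \<longleftrightarrow> (\<exists>\<alpha> \<beta>. bracket C (E 0) (E 1) = \<alpha> *\<^sub>R E 0 \<and>
      bracket C (E 0) (E 2) = \<beta> *\<^sub>R E 0 \<and> bracket C (E 1) (E 2) = 0)"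
  unfolding inF11_def by (simp add: class_simps) (auto simp: field_simps)

end

theorem theorem2p1:
  fixes C :: "3 \<Rightarrow> 3 \<Rightarrow> 3 \<Rightarrow> real"
  assumes "lie_algebra C"
  shows
   "(inF1 C \<longleftrightarrow> (\<exists>\<alpha> \<beta>::real. bracket C (E 0) (E 1) = 0 \<and> bracket C (E 0) (E 2) = 0 \<and>
        bracket C (E 1) (E 2) = \<alpha> *\<^sub>R E 1 + \<beta> *\<^sub>R E 2)) \<and>
    (inF4 C \<longleftrightarrow> (\<exists>\<alpha>::real. bracket C (E 0) (E 1) = \<alpha> *\<^sub>R E 2 \<and>
        bracket C (E 0) (E 2) = - \<alpha> *\<^sub>R E 1 \<and> bracket C (E 1) (E 2) = 0)) \<and>
    (inF5 C \<longleftrightarrow> (\<exists>\<alpha>::real. bracket C (E 0) (E 1) = \<alpha> *\<^sub>R E 1 \<and>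
        bracket C (E 0) (E 2) = \<alpha> *\<^sub>R E 2 \<and> bracket C (E 1) (E 2) = 0)) \<and>
    (inF8 C \<longleftrightarrow> (\<exists>\<alpha>::real. bracket C (E 0) (E 1) = \<alpha> *\<^sub>R E 2 \<and>
        bracket C (E 0) (E 2) = \<alpha> *\<^sub>R E 1 \<and> bracket C (E 1) (E 2) = (-2 * \<alpha>) *\<^sub>R E 0)) \<and>
    (inF9 C \<longleftrightarrow> (\<exists>\<alpha>::real. bracket C (E 0) (E 1) = \<alpha> *\<^sub>R E 1 \<and>
        bracket C (E 0) (E 2) = - \<alpha> *\<^sub>R E 2 \<and> bracket C (E 1) (E 2) = 0)) \<and>
    (inF10 C \<longleftrightarrow> (\<exists>\<alpha>::real. bracket C (E 0) (E 1) = \<alpha> *\<^sub>R E 2 \<and>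
        bracket C (E 0) (E 2) = \<alpha> *\<^sub>R E 1 \<and> bracket C (E 1) (E 2) = 0)) \<and>
    (inF11 C \<longleftrightarrow> (\<exists>\<alpha> \<beta>::real. bracket C (E 0) (E 1) = \<alpha> *\<^sub>R E 0 \<and>
        bracket C (E 0) (E 2) = \<beta> *\<^sub>R E 0 \<and> bracket C (E 1) (E 2) = 0))"
proof -
  have antisym: "\<And>i j k. C i j k = - C j i k"
    using lie_algebra_antisym[OF assms] .
  note iffs = inF1_iff inF4_iff inF5_iff inF8_iff inF9_iff inF10_iff inF11_iff
  show ?thesis
    by (simp only: iffs[where C = C, OF antisym])
qed

end
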